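(* Let $\mathcal{C}$ be a symmetric monoidal category with discarding $\top$, completely mixed states $\mu$ and zero morphisms, satisfying normalisation, the sharpness axiom and the pure composition axiom, and suppose that for every object $A$, $\top_A$ is the unique effect $e$ on $A$ with $e\circ\psi=1_I$ for every causal pure state $\psi$ of $A$. Then the pre-duals axiom holds if and only if for every object $A$ the state $\mu_A$ has a purification $\omega$, a pure state of $A\otimes B$ for some object $B$, which also purifies $\mu_B$, i.e. $(1_A\otimes\top_B)\circ\omega=\mu_A$ and $(\top_A\otimes 1_B)\circ\omega=\mu_B$.
   Context: States: morphisms $I\to A$; effects: $A\to I$; scalars $I\to I$; unitors and associators suppressed. Discarding: effects $\top_A$ with $\top_{A\otimes B}=\top_A\otimes\top_B$, $\top_I=1_I$. Completely mixed states: states $\mu_A$ with $\mu_{A\otimes B}=\mu_A\otimes\mu_B$, $\mu_I=1_I$. Causal: $\top_B\circ f=\top_A$; co-causal: $f\circ\mu_A=\mu_B$. Zero morphisms: absorbing morphisms $0\colon A\to B$. Normalisation: every non-zero state $\rho$ is $\sigma\otimes r$ for a scalar $r$ and a unique causal state $\sigma$ (its normalisation). Pure: $f\colon A\to B$ is pure if $f=0$ or whenever $(1_B\otimes\top_C)\circ g=f$ for $g\colon A\to B\otimes C$, then $g=f\otimes\rho$ for some causal state $\rho$. A purification of a state $\rho$ of $A$ is a pure state $\psi$ of $A\otimes B$ with $(1_A\otimes\top_B)\circ\psi=\rho$. Sharpness axiom: for every causal pure state $\psi$ there is a unique pure co-causal effect $\overline{\psi}$ with $\overline{\psi}\circ\psi=1_I$,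 and $\psi$ is the unique causal pure state with this property. Extended to pure states by $\overline{0}=0$ and $\overline{\psi}:=\overline{\phi}\otimes r$ for non-zero pure $\psi$ with normalisation $\phi$ and $r=\top\circ\psi$. Pure composition axiom: for all causal pure states $\psi$ of $A\otimes B$ and $\phi$ of $A$, the state $(\overline{\phi}\otimes 1_B)\circ\psi$ and effect $\overline{\psi}\circ(\phi\otimes 1_B)$ are pure and $\overline{(\overline{\phi}\otimes 1_B)\circ\psi}=\overline{\psi}\circ(\phi\otimes 1_B)$. Pre-duals axiom: each $\mu_A$ has a purification $\omega$ (pure state of $A\otimes B$) with $(\top_A\otimes 1_B)\circ\omega=\mu_B$, $\overline{\omega}\circ(\mu_A\otimes 1_B)=\top_B$ and $\overline{\omega}\circ(1_A\otimes\mu_B)=\top_A$. *)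

theory Defs
  imports Main
begin

text \<open>A strict symmetric monoidal category (unitors and associators suppressed),
  together with discarding effects, completely mixed states and zero morphisms.\<close>

record ('o, 'm) opt_cat =
  Ob :: "'o set"
  Ar :: "'m set"
  Dom :: "'m \<Rightarrow> 'o"
  Cod :: "'m \<Rightarrow> 'o"
  Cmp :: "'m \<Rightarrow> 'm \<Rightarrow> 'm"   (* Cmp g f = g \<circ> f *)
  Idm :: "'o \<Rightarrow> 'm"
  TensO :: "'o \<Rightarrow> 'o \<Rightarrow> 'o"
  TensM :: "'m \<Rightarrow> 'm \<Rightarrow> 'm"
  UnitO :: "'o"
  Swap :: "'o \<Rightarrow> 'o \<Rightarrow> 'm"
  Disc :: "'o \<Rightarrow> 'm"
  Mix :: "'o \<Rightarrow> 'm"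
  Zero :: "'o \<Rightarrow> 'o \<Rightarrow> 'm"

definition hom :: "('o,'m) opt_cat \<Rightarrow> 'o \<Rightarrow> 'o \<Rightarrow> 'm set" where
  "hom C A B = {f \<in> Ar C. Dom C f = A \<and> Cod C f = B}"

definition strict_smc :: "('o,'m) opt_cat \<Rightarrow> bool" where
  "strict_smc C \<longleftrightarrow>
    (\<forall>f \<in> Ar C. Dom C f \<in> Ob C \<and> Cod C f \<in> Ob C) \<and>
    (\<forall>A \<in> Ob C. Idm C A \<in> hom C A A) \<and>
    (\<forall>A B D f g. f \<in> hom C A B \<longrightarrow> g \<in> hom C B D \<longrightarrow> Cmp C g f \<in> hom C A D) \<and>
    (\<forall>A B f. f \<in> hom C A B \<longrightarrow> Cmp C f (Idm C A) = f \<and> Cmp C (Idm C B) f = f) \<and>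
    (\<forall>A B D E f g h. f \<in> hom C A B \<longrightarrow> g \<in> hom C B D \<longrightarrow> h \<in> hom C D E \<longrightarrow>
        Cmp C h (Cmp C g f) = Cmp C (Cmp C h g) f) \<and>
    UnitO C \<in> Ob C \<and>
    (\<forall>A \<in> Ob C. \<forall>B \<in> Ob C. TensO C A B \<in> Ob C) \<and>
    (\<forall>A B D E f g. f \<in> hom C A B \<longrightarrow> g \<in> hom C D E \<longrightarrow>
        TensM C f g \<in> hom C (TensO C A D) (TensO C B E)) \<and>
    (\<forall>A B D A' B' D' f g f' g'. f \<in> hom C A B \<longrightarrow> g \<in> hom C B D \<longrightarrow>
        f' \<in> hom C A' B' \<longrightarrow> g' \<in> hom C B' D' \<longrightarrow>
        TensM C (Cmp C g f) (Cmp C g' f') = Cmp C (TensM C g g') (TensM C f f')) \<and>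
    (\<forall>A \<in> Ob C. \<forall>B \<in> Ob C. TensM C (Idm C A) (Idm C B) = Idm C (TensO C A B)) \<and>
    (\<forall>A \<in> Ob C. \<forall>B \<in> Ob C. \<forall>D \<in> Ob C.
        TensO C (TensO C A B) D = TensO C A (TensO C B D)) \<and>
    (\<forall>A \<in> Ob C. TensO C (UnitO C) A = A \<and> TensO C A (UnitO C) = A) \<and>
    (\<forall>f \<in> Ar C. \<forall>g \<in> Ar C. \<forall>h \<in> Ar C. TensM C (TensM C f g) h = TensM C f (TensM C g h)) \<and>
    (\<forall>f \<in> Ar C. TensM C (Idm C (UnitO C)) f = f \<and> TensM C f (Idm C (UnitO C)) = f) \<and>
    (\<forall>A \<in> Ob C. \<forall>B \<in> Ob C. Swap C A B \<in> hom C (TensO C A B) (TensO C B A)) \<and>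
    (\<forall>A \<in> Ob C. \<forall>B \<in> Ob C. Cmp C (Swap C B A) (Swap C A B) = Idm C (TensO C A B)) \<and>
    (\<forall>A B D E f g. f \<in> hom C A B \<longrightarrow> g \<in> hom C D E \<longrightarrow>
        Cmp C (Swap C B E) (TensM C f g) = Cmp C (TensM C g f) (Swap C A D)) \<and>
    (\<forall>A \<in> Ob C. \<forall>B \<in> Ob C. \<forall>D \<in> Ob C.
        Swap C A (TensO C B D) =
          Cmp C (TensM C (Idm C B) (Swap C A D)) (TensM C (Swap C A B) (Idm C D)))"

definition has_discarding :: "('o,'m) opt_cat \<Rightarrow> bool" where
  "has_discarding C \<longleftrightarrow>
    (\<forall>A \<in> Ob C. Disc C A \<in> hom C A (UnitO C)) \<and>
    (\<forall>A \<in> Ob C. \<forall>B \<in> Ob C. Disc C (TensO C A B) = TensM C (Disc C A) (Disc C B)) \<and>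
    Disc C (UnitO C) = Idm C (UnitO C)"

definition has_mixed :: "('o,'m) opt_cat \<Rightarrow> bool" where
  "has_mixed C \<longleftrightarrow>
    (\<forall>A \<in> Ob C. Mix C A \<in> hom C (UnitO C) A) \<and>
    (\<forall>A \<in> Ob C. \<forall>B \<in> Ob C. Mix C (TensO C A B) = TensM C (Mix C A) (Mix C B)) \<and>
    Mix C (UnitO C) = Idm C (UnitO C)"

definition has_zeros :: "('o,'m) opt_cat \<Rightarrow> bool" where
  "has_zeros C \<longleftrightarrow>
    (\<forall>A \<in> Ob C. \<forall>B \<in> Ob C. Zero C A B \<in> hom C A B) \<and>
    (\<forall>A B D f. f \<in> hom C B D \<longrightarrow> A \<in> Ob C \<longrightarrow> Cmp C f (Zero C A B) = Zero C A D) \<and>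
    (\<forall>A B D f. f \<in> hom C A B \<longrightarrow> D \<in> Ob C \<longrightarrow> Cmp C (Zero C B D) f = Zero C A D) \<and>
    (\<forall>A B D E f. f \<in> hom C A B \<longrightarrow> D \<in> Ob C \<longrightarrow> E \<in> Ob C \<longrightarrow>
        TensM C f (Zero C D E) = Zero C (TensO C A D) (TensO C B E) \<and>
        TensM C (Zero C D E) f = Zero C (TensO C D A) (TensO C E B))"

definition causal :: "('o,'m) opt_cat \<Rightarrow> 'm \<Rightarrow> bool" where
  "causal C f \<longleftrightarrow> Cmp C (Disc C (Cod C f)) f = Disc C (Dom C f)"

definition cocausal :: "('o,'m) opt_cat \<Rightarrow> 'm \<Rightarrow> bool" where
  "cocausal C f \<longleftrightarrow> Cmp C f (Mix C (Dom C f)) = Mix C (Cod C f)"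

definition pure :: "('o,'m) opt_cat \<Rightarrow> 'm \<Rightarrow> bool" where
  "pure C f \<longleftrightarrow> f = Zero C (Dom C f) (Cod C f) \<or>
    (\<forall>D \<in> Ob C. \<forall>g \<in> hom C (Dom C f) (TensO C (Cod C f) D).
       Cmp C (TensM C (Idm C (Cod C f)) (Disc C D)) g = f \<longrightarrow>
       (\<exists>\<rho> \<in> hom C (UnitO C) D. causal C \<rho> \<and> g = TensM C f \<rho>))"

definition normalisation :: "('o,'m) opt_cat \<Rightarrow> bool" where
  "normalisation C \<longleftrightarrow>
    (\<forall>A \<in> Ob C. \<forall>\<rho> \<in> hom C (UnitO C) A. \<rho> \<noteq> Zero C (UnitO C) A \<longrightarrow>
       (\<exists>!\<sigma>. \<sigma> \<in> hom C (UnitO C) A \<and> causal C \<sigma> \<and>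
             (\<exists>r \<in> hom C (UnitO C) (UnitO C). \<rho> = TensM C \<sigma> r)))"

definition normalise :: "('o,'m) opt_cat \<Rightarrow> 'm \<Rightarrow> 'm" where
  "normalise C \<rho> = (THE \<sigma>. \<sigma> \<in> hom C (UnitO C) (Cod C \<rho>) \<and> causal C \<sigma> \<and>
             (\<exists>r \<in> hom C (UnitO C) (UnitO C). \<rho> = TensM C \<sigma> r))"

definition dagger_causal :: "('o,'m) opt_cat \<Rightarrow> 'm \<Rightarrow> 'm" where
  "dagger_causal C \<psi> = (THE e. e \<in> hom C (Cod C \<psi>) (UnitO C) \<and> pure C e \<and> cocausal C e \<and>
                          Cmp C e \<psi> = Idm C (UnitO C))"

definition sharpness :: "('o,'m) opt_cat \<Rightarrow> bool" where
  "sharpness C \<longleftrightarrow>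
    (\<forall>A \<in> Ob C. \<forall>\<psi> \<in> hom C (UnitO C) A. causal C \<psi> \<longrightarrow> pure C \<psi> \<longrightarrow>
       (\<exists>!e. e \<in> hom C A (UnitO C) \<and> pure C e \<and> cocausal C e \<and> Cmp C e \<psi> = Idm C (UnitO C)) \<and>
       (\<forall>\<psi>' \<in> hom C (UnitO C) A. causal C \<psi>' \<longrightarrow> pure C \<psi>' \<longrightarrow>
          Cmp C (dagger_causal C \<psi>) \<psi>' = Idm C (UnitO C) \<longrightarrow> \<psi>' = \<psi>))"

definition bar :: "('o,'m) opt_cat \<Rightarrow> 'm \<Rightarrow> 'm" where
  "bar C \<psi> = (if \<psi> = Zero C (UnitO C) (Cod C \<psi>) then Zero C (Cod C \<psi>) (UnitO C)
              else TensM C (dagger_causal C (normalise C \<psi>)) (Cmp C (Disc C (Cod C \<psi>)) \<psi>))"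

definition pure_composition :: "('o,'m) opt_cat \<Rightarrow> bool" where
  "pure_composition C \<longleftrightarrow>
    (\<forall>A \<in> Ob C. \<forall>B \<in> Ob C. \<forall>\<psi> \<in> hom C (UnitO C) (TensO C A B). \<forall>\<phi> \<in> hom C (UnitO C) A.
       causal C \<psi> \<longrightarrow> pure C \<psi> \<longrightarrow> causal C \<phi> \<longrightarrow> pure C \<phi> \<longrightarrow>
       pure C (Cmp C (TensM C (bar C \<phi>) (Idm C B)) \<psi>) \<and>
       pure C (Cmp C (bar C \<psi>) (TensM C \<phi> (Idm C B))) \<and>
       bar C (Cmp C (TensM C (bar C \<phi>) (Idm C B)) \<psi>) = Cmp C (bar C \<psi>) (TensM C \<phi> (Idm C B)))"

definition double_purification :: "('o,'m) opt_cat \<Rightarrow> 'o \<Rightarrow> 'o \<Rightarrow> 'm \<Rightarrow> bool" where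
  "double_purification C A B \<omega> \<longleftrightarrow>
     \<omega> \<in> hom C (UnitO C) (TensO C A B) \<and> pure C \<omega> \<and>
     Cmp C (TensM C (Idm C A) (Disc C B)) \<omega> = Mix C A \<and>
     Cmp C (TensM C (Disc C A) (Idm C B)) \<omega> = Mix C B"

definition pre_duals :: "('o,'m) opt_cat \<Rightarrow> bool" where
  "pre_duals C \<longleftrightarrow>
    (\<forall>A \<in> Ob C. \<exists>B \<in> Ob C. \<exists>\<omega>. double_purification C A B \<omega> \<and>
       Cmp C (bar C \<omega>) (TensM C (Mix C A) (Idm C B)) = Disc C B \<and>
       Cmp C (bar C \<omega>) (TensM C (Idm C A) (Mix C B)) = Disc C A)"

end

theory Submission
  imports Defs
begin

(* Let \<omega> be a pure state of A \<otimes> B purifying both \<mu>_A and \<mu>_B. Since \<top>_A is the only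
   effect sending every causal pure state to 1, the equation bar \<omega> \<circ> (1_A \<otimes> \<mu>_B) = \<top>_A
   only has to be tested on causal pure states \<phi>. The pure composition axiom, extended from
   causal to arbitrary pure \<omega> by normalisation, gives
     bar \<omega> \<circ> (\<phi> \<otimes> \<mu>_B) = bar \<phi> \<circ> (1_A \<otimes> \<top>_B) \<circ> \<omega> = bar \<phi> \<circ> \<mu>_A,
   and bar \<phi> \<circ> \<mu>_A = 1 because the bar of a causal pure state is co-causal.
   The second pre-duals equation follows by applying the first one to the swapped state,
   whose bar is bar \<omega> composed with the inverse swap. *)

definition pure_states_determine_discard :: "('o, 'm) opt_cat \<Rightarrow> 'o \<Rightarrow> bool" where
  "pure_states_determine_discard C A \<longleftrightarrow>
    (\<forall>e \<in> hom C A (UnitO C).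
       (\<forall>\<psi> \<in> hom C (UnitO C) A. causal C \<psi> \<longrightarrow> pure C \<psi> \<longrightarrow> Cmp C e \<psi> = Idm C (UnitO C)) \<longrightarrow>
       e = Disc C A)"

locale sharp_theory =
  fixes C :: "('o, 'm) opt_cat"
  assumes smc: "strict_smc C"
    and discarding: "has_discarding C"
    and mixed: "has_mixed C"
    and zeros: "has_zeros C"
    and normalisation: "normalisation C"
    and sharpness: "sharpness C"
    and pure_composition: "pure_composition C"
begin

abbreviation I where "I \<equiv> UnitO C"
abbreviation comp (infixr "\<cdot>" 55) where "g \<cdot> f \<equiv> Cmp C g f"
abbreviation tens (infixl "\<otimes>" 65) where "f \<otimes> g \<equiv> TensM C f g"
abbreviation tens_ob (infixl "\<otimes>\<^sub>o" 65) where "A \<otimes>\<^sub>o B \<equiv> TensO C A B"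
abbreviation idm where "idm A \<equiv> Idm C A"
abbreviation Z where "Z A B \<equiv> Zero C A B"
abbreviation Dc where "Dc A \<equiv> Disc C A"
abbreviation Mx where "Mx A \<equiv> Mix C A"
abbreviation Sw where "Sw A B \<equiv> Swap C A B"

lemma arr_dom_cod_ob [simp]:
  "f \<in> Ar C \<Longrightarrow> Dom C f \<in> Ob C" "f \<in> Ar C \<Longrightarrow> Cod C f \<in> Ob C"
  using smc unfolding strict_smc_def by auto

lemma hom_ob:
  assumes "f \<in> hom C A B"
  shows "A \<in> Ob C" "B \<in> Ob C"
  using assms arr_dom_cod_ob unfolding hom_def by auto

lemma unit_ob [simp]: "I \<in> Ob C"
  and tens_ob [simp]: "A \<in> Ob C \<Longrightarrow> B \<in> Ob C \<Longrightarrow> A \<otimes>\<^sub>o B \<in> Ob C"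
  and tens_ob_unit [simp]:
    "A \<in> Ob C \<Longrightarrow> I \<otimes>\<^sub>o A = A" "A \<in> Ob C \<Longrightarrow> A \<otimes>\<^sub>o I = A"
  using smc unfolding strict_smc_def by auto

lemma comp_arr [simp]:
  assumes "f \<in> Ar C" "g \<in> Ar C" "Dom C g = Cod C f"
  shows "g \<cdot> f \<in> Ar C" "Dom C (g \<cdot> f) = Dom C f" "Cod C (g \<cdot> f) = Cod C g"
proof -
  have "\<forall>A B D f g. f \<in> hom C A B \<longrightarrow> g \<in> hom C B D \<longrightarrow> g \<cdot> f \<in> hom C A D"
    using smc unfolding strict_smc_def by (elim conjE) assumption
  then show "g \<cdot> f \<in> Ar C" "Dom C (g \<cdot> f) = Dom C f" "Cod C (g \<cdot> f) = Cod C g"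
    using assms unfolding hom_def by auto
qed

lemma tens_arr [simp]:
  assumes "f \<in> Ar C" "g \<in> Ar C"
  shows "f \<otimes> g \<in> Ar C" "Dom C (f \<otimes> g) = Dom C f \<otimes>\<^sub>o Dom C g"
    "Cod C (f \<otimes> g) = Cod C f \<otimes>\<^sub>o Cod C g"
proof -
  have "\<forall>A B D E f g. f \<in> hom C A B \<longrightarrow> g \<in> hom C D E \<longrightarrow>
        f \<otimes> g \<in> hom C (A \<otimes>\<^sub>o D) (B \<otimes>\<^sub>o E)"
    using smc unfolding strict_smc_def by (elim conjE) assumption
  then show "f \<otimes> g \<in> Ar C" "Dom C (f \<otimes> g) = Dom C f \<otimes>\<^sub>o Dom C g"
    "Cod C (f \<otimes> g) = Cod C f \<otimes>\<^sub>o Cod C g"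
    using assms unfolding hom_def by auto
qed

lemma id_arr [simp]:
  "A \<in> Ob C \<Longrightarrow> idm A \<in> Ar C" "A \<in> Ob C \<Longrightarrow> Dom C (idm A) = A" "A \<in> Ob C \<Longrightarrow> Cod C (idm A) = A"
  using smc unfolding strict_smc_def hom_def by auto

lemma swap_arr [simp]:
  "A \<in> Ob C \<Longrightarrow> B \<in> Ob C \<Longrightarrow> Sw A B \<in> Ar C"
  "A \<in> Ob C \<Longrightarrow> B \<in> Ob C \<Longrightarrow> Dom C (Sw A B) = A \<otimes>\<^sub>o B"
  "A \<in> Ob C \<Longrightarrow> B \<in> Ob C \<Longrightarrow> Cod C (Sw A B) = B \<otimes>\<^sub>o A"
  using smc unfolding strict_smc_def hom_def by auto

lemma disc_arr [simp]:
  "A \<in> Ob C \<Longrightarrow> Dc A \<in> Ar C" "A \<in> Ob C \<Longrightarrow> Dom C (Dc A) = A" "A \<in> Ob C \<Longrightarrow> Cod C (Dc A) = I"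
  using discarding unfolding has_discarding_def hom_def by auto

lemma mix_arr [simp]:
  "A \<in> Ob C \<Longrightarrow> Mx A \<in> Ar C" "A \<in> Ob C \<Longrightarrow> Dom C (Mx A) = I" "A \<in> Ob C \<Longrightarrow> Cod C (Mx A) = A"
  using mixed unfolding has_mixed_def hom_def by auto

lemma zero_arr [simp]:
  "A \<in> Ob C \<Longrightarrow> B \<in> Ob C \<Longrightarrow> Z A B \<in> Ar C"
  "A \<in> Ob C \<Longrightarrow> B \<in> Ob C \<Longrightarrow> Dom C (Z A B) = A"
  "A \<in> Ob C \<Longrightarrow> B \<in> Ob C \<Longrightarrow> Cod C (Z A B) = B"
  using zeros unfolding has_zeros_def hom_def by auto

lemma comp_id [simp]: "f \<in> Ar C \<Longrightarrow> Dom C f = A \<Longrightarrow> f \<cdot> idm A = f"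
  and id_comp [simp]: "f \<in> Ar C \<Longrightarrow> Cod C f = B \<Longrightarrow> idm B \<cdot> f = f"
proof -
  have "\<forall>A B f. f \<in> hom C A B \<longrightarrow> f \<cdot> idm A = f \<and> idm B \<cdot> f = f"
    using smc unfolding strict_smc_def by (elim conjE) assumption
  then show "f \<in> Ar C \<Longrightarrow> Dom C f = A \<Longrightarrow> f \<cdot> idm A = f"
    and "f \<in> Ar C \<Longrightarrow> Cod C f = B \<Longrightarrow> idm B \<cdot> f = f"
    unfolding hom_def by auto
qed

lemma comp_assoc [simp]:
  assumes "f \<in> Ar C" "g \<in> Ar C" "h \<in> Ar C" "Dom C g = Cod C f" "Dom C h = Cod C g"
  shows "(h \<cdot> g) \<cdot> f = h \<cdot> (g \<cdot> f)"
proof -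
  have "\<forall>A B D E f g h. f \<in> hom C A B \<longrightarrow> g \<in> hom C B D \<longrightarrow> h \<in> hom C D E \<longrightarrow>
        h \<cdot> (g \<cdot> f) = (h \<cdot> g) \<cdot> f"
    using smc unfolding strict_smc_def by (elim conjE) assumption
  then show ?thesis
    using assms unfolding hom_def by auto
qed

lemma interchange [simp]:
  assumes "f \<in> Ar C" "g \<in> Ar C" "f' \<in> Ar C" "g' \<in> Ar C" "Dom C g = Cod C f" "Dom C g' = Cod C f'"
  shows "(g \<otimes> g') \<cdot> (f \<otimes> f') = (g \<cdot> f) \<otimes> (g' \<cdot> f')"
proof -
  have "\<forall>A B D A' B' D' f g f' g'. f \<in> hom C A B \<longrightarrow> g \<in> hom C B D \<longrightarrow>
        f' \<in> hom C A' B' \<longrightarrow> g' \<in> hom C B' D' \<longrightarrow>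
        (g \<cdot> f) \<otimes> (g' \<cdot> f') = (g \<otimes> g') \<cdot> (f \<otimes> f')"
    using smc unfolding strict_smc_def by (elim conjE) assumption
  then show ?thesis
    using assms unfolding hom_def by auto
qed

lemma tens_id [simp]: "A \<in> Ob C \<Longrightarrow> B \<in> Ob C \<Longrightarrow> idm A \<otimes> idm B = idm (A \<otimes>\<^sub>o B)"
  using smc unfolding strict_smc_def by (elim conjE) metis

lemma tens_assoc [simp]:
  "f \<in> Ar C \<Longrightarrow> g \<in> Ar C \<Longrightarrow> h \<in> Ar C \<Longrightarrow> f \<otimes> g \<otimes> h = f \<otimes> (g \<otimes> h)"
  using smc unfolding strict_smc_def by (elim conjE) metis

lemma tens_unit [simp]: "f \<in> Ar C \<Longrightarrow> idm I \<otimes> f = f" "f \<in> Ar C \<Longrightarrow> f \<otimes> idm I = f"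
  using smc unfolding strict_smc_def by (elim conjE; metis)+

lemma swap_inverse: "A \<in> Ob C \<Longrightarrow> B \<in> Ob C \<Longrightarrow> Sw B A \<cdot> Sw A B = idm (A \<otimes>\<^sub>o B)"
  using smc unfolding strict_smc_def by (elim conjE) metis

lemma swap_natural:
  assumes "f \<in> Ar C" "g \<in> Ar C"
  shows "Sw (Cod C f) (Cod C g) \<cdot> (f \<otimes> g) = (g \<otimes> f) \<cdot> Sw (Dom C f) (Dom C g)"
proof -
  have "\<forall>A B D E f g. f \<in> hom C A B \<longrightarrow> g \<in> hom C D E \<longrightarrow>
        Sw B E \<cdot> (f \<otimes> g) = (g \<otimes> f) \<cdot> Sw A D"
    using smc unfolding strict_smc_def by (elim conjE) assumption
  then show ?thesis
    using assms unfolding hom_def by auto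
qed

lemma swap_hexagon:
  "A \<in> Ob C \<Longrightarrow> B \<in> Ob C \<Longrightarrow> D \<in> Ob C \<Longrightarrow>
   Sw A (B \<otimes>\<^sub>o D) = (idm B \<otimes> Sw A D) \<cdot> (Sw A B \<otimes> idm D)"
  using smc unfolding strict_smc_def by (elim conjE) metis

lemma disc_tens [simp]: "A \<in> Ob C \<Longrightarrow> B \<in> Ob C \<Longrightarrow> Dc (A \<otimes>\<^sub>o B) = Dc A \<otimes> Dc B"
  and disc_unit [simp]: "Dc I = idm I"
  using discarding unfolding has_discarding_def by auto

lemma mix_tens [simp]: "A \<in> Ob C \<Longrightarrow> B \<in> Ob C \<Longrightarrow> Mx (A \<otimes>\<^sub>o B) = Mx A \<otimes> Mx B"
  and mix_unit [simp]: "Mx I = idm I"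
  using mixed unfolding has_mixed_def by auto

lemma zero_comp [simp]:
    "f \<in> Ar C \<Longrightarrow> Cod C f = B \<Longrightarrow> D \<in> Ob C \<Longrightarrow> Z B D \<cdot> f = Z (Dom C f) D"
  and comp_zero [simp]:
    "f \<in> Ar C \<Longrightarrow> Dom C f = B \<Longrightarrow> A \<in> Ob C \<Longrightarrow> f \<cdot> Z A B = Z A (Cod C f)"
  and zero_tens [simp]:
    "f \<in> Ar C \<Longrightarrow> D \<in> Ob C \<Longrightarrow> E \<in> Ob C \<Longrightarrow> Z D E \<otimes> f = Z (D \<otimes>\<^sub>o Dom C f) (E \<otimes>\<^sub>o Cod C f)"
  using zeros unfolding has_zeros_def hom_def by auto

(* Interchange in the form that survives simp's right-association of composites. *)
lemma interchange_comp [simp]: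
  "f \<in> Ar C \<Longrightarrow> g \<in> Ar C \<Longrightarrow> f' \<in> Ar C \<Longrightarrow> g' \<in> Ar C \<Longrightarrow> x \<in> Ar C \<Longrightarrow>
   Dom C g = Cod C f \<Longrightarrow> Dom C g' = Cod C f' \<Longrightarrow> Cod C x = Dom C f \<otimes>\<^sub>o Dom C f' \<Longrightarrow>
   (g \<otimes> g') \<cdot> ((f \<otimes> f') \<cdot> x) = ((g \<cdot> f) \<otimes> (g' \<cdot> f')) \<cdot> x"
  by (simp flip: comp_assoc)

lemma swap_unit [simp]:
  assumes A: "A \<in> Ob C"
  shows "Sw A I = idm A" "Sw I A = idm A"
proof -
  have idem: "Sw A I \<cdot> Sw A I = Sw A I"
    using swap_hexagon[OF A unit_ob unit_ob] A by simp
  have inv: "Sw I A \<cdot> Sw A I = idm A"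
    using swap_inverse[OF A unit_ob] A by simp
  have "Sw A I = (Sw I A \<cdot> Sw A I) \<cdot> Sw A I"
    using inv A by simp
  also have "\<dots> = Sw I A \<cdot> (Sw A I \<cdot> Sw A I)"
    by (rule comp_assoc) (use A in simp_all)
  also have "\<dots> = idm A"
    using idem inv by simp
  finally show "Sw A I = idm A" .
  then show "Sw I A = idm A"
    using inv A by simp
qed

lemma swap_states: "x \<in> hom C I A \<Longrightarrow> y \<in> hom C I B \<Longrightarrow> Sw A B \<cdot> (x \<otimes> y) = y \<otimes> x"
  using swap_natural[of x y] by (simp add: hom_def)

lemma scalar_commute:
  "\<rho> \<in> hom C I D \<Longrightarrow> r \<in> hom C I I \<Longrightarrow> \<rho> \<otimes> r = r \<otimes> \<rho>"
  using swap_states[of \<rho> D r I] hom_ob[of \<rho> I D] by (simp add: hom_def)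

lemma disc_comp_swap:
  "A \<in> Ob C \<Longrightarrow> B \<in> Ob C \<Longrightarrow> Dc (B \<otimes>\<^sub>o A) \<cdot> Sw A B = Dc (A \<otimes>\<^sub>o B)"
  using swap_natural[of "Dc A" "Dc B"] by simp

lemma swap_comp_mix:
  "A \<in> Ob C \<Longrightarrow> B \<in> Ob C \<Longrightarrow> Sw A B \<cdot> Mx (A \<otimes>\<^sub>o B) = Mx (B \<otimes>\<^sub>o A)"
  using swap_natural[of "Mx A" "Mx B"] by simp

lemma causal_state_iff: "\<rho> \<in> hom C I D \<Longrightarrow> causal C \<rho> \<longleftrightarrow> Dc D \<cdot> \<rho> = idm I"
  by (simp add: causal_def hom_def)

lemma cocausal_effect_iff: "e \<in> hom C X I \<Longrightarrow> cocausal C e \<longleftrightarrow> e \<cdot> Mx X = idm I"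
  by (simp add: cocausal_def hom_def)

lemma pure_hom_iff:
  "f \<in> hom C X Y \<Longrightarrow> pure C f \<longleftrightarrow> f = Z X Y \<or>
     (\<forall>D \<in> Ob C. \<forall>g \<in> hom C X (Y \<otimes>\<^sub>o D). (idm Y \<otimes> Dc D) \<cdot> g = f \<longrightarrow>
        (\<exists>\<rho> \<in> hom C I D. causal C \<rho> \<and> g = f \<otimes> \<rho>))"
  by (simp add: pure_def hom_def)

lemma pure_iso_comp:
  assumes f: "f \<in> hom C X Y" "pure C f"
    and k: "k \<in> hom C Y W" "k' \<in> hom C W Y" "k' \<cdot> k = idm Y" "k \<cdot> k' = idm W"
  shows "pure C (k \<cdot> f)"
proof -
  have ob: "X \<in> Ob C" "Y \<in> Ob C" "W \<in> Ob C"
    using hom_ob f k by auto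
  note arrs = f(1)[unfolded hom_def] k(1,2)[unfolded hom_def]
  have kf: "k \<cdot> f \<in> hom C X W"
    using arrs by (simp add: hom_def)
  show ?thesis
  proof (cases "f = Z X Y")
    case True
    then show ?thesis
      using pure_hom_iff[OF kf] arrs ob by simp
  next
    case False
    then have split: "\<forall>D\<in>Ob C. \<forall>g\<in>hom C X (Y \<otimes>\<^sub>o D). (idm Y \<otimes> Dc D) \<cdot> g = f \<longrightarrow>
        (\<exists>\<rho>\<in>hom C I D. causal C \<rho> \<and> g = f \<otimes> \<rho>)"
      using pure_hom_iff f by blast
    have "\<exists>\<rho>\<in>hom C I D. causal C \<rho> \<and> g' = (k \<cdot> f) \<otimes> \<rho>"
      if D: "D \<in> Ob C" and g': "g' \<in> hom C X (W \<otimes>\<^sub>o D)"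
        and eq: "(idm W \<otimes> Dc D) \<cdot> g' = k \<cdot> f" for D g'
    proof -
      note g'_arr = g'[unfolded hom_def]
      define g where "g = (k' \<otimes> idm D) \<cdot> g'"
      have g: "g \<in> hom C X (Y \<otimes>\<^sub>o D)"
        using g'_arr arrs D ob by (simp add: g_def hom_def)
      have "(idm Y \<otimes> Dc D) \<cdot> g = (k' \<otimes> Dc D) \<cdot> g'"
        using g'_arr arrs D ob by (simp add: g_def)
      also have "\<dots> = ((k' \<otimes> idm I) \<cdot> (idm W \<otimes> Dc D)) \<cdot> g'"
        using arrs D ob by (simp del: tens_unit)
      also have "\<dots> = k' \<cdot> (k \<cdot> f)"
        using eq g'_arr arrs D ob by simp
      also have "\<dots> = f"
        using k(3) arrs by (simp flip: comp_assoc)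
      finally obtain \<rho> where \<rho>: "\<rho> \<in> hom C I D" "causal C \<rho>" "g = f \<otimes> \<rho>"
        using split D g by blast
      have "g' = (k \<otimes> idm D) \<cdot> g"
        using g'_arr arrs D ob k(4) by (simp add: g_def flip: comp_assoc)
      also have "\<dots> = (k \<cdot> f) \<otimes> \<rho>"
        using \<rho> arrs D by (simp add: hom_def)
      finally show ?thesis
        using \<rho> by blast
    qed
    then show ?thesis
      using pure_hom_iff[OF kf] by blast
  qed
qed

lemma pure_comp_iso:
  assumes f: "f \<in> hom C X Y" "pure C f"
    and h: "h \<in> hom C W X" "h' \<in> hom C X W" "h' \<cdot> h = idm W" "h \<cdot> h' = idm X"
  shows "pure C (f \<cdot> h)"
proof -
  have ob: "X \<in> Ob C" "Y \<in> Ob C" "W \<in> Ob C"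
    using hom_ob f h by auto
  note arrs = f(1)[unfolded hom_def] h(1,2)[unfolded hom_def]
  have fh: "f \<cdot> h \<in> hom C W Y"
    using arrs by (simp add: hom_def)
  show ?thesis
  proof (cases "f = Z X Y")
    case True
    then show ?thesis
      using pure_hom_iff[OF fh] arrs ob by simp
  next
    case False
    then have split: "\<forall>D\<in>Ob C. \<forall>g\<in>hom C X (Y \<otimes>\<^sub>o D). (idm Y \<otimes> Dc D) \<cdot> g = f \<longrightarrow>
        (\<exists>\<rho>\<in>hom C I D. causal C \<rho> \<and> g = f \<otimes> \<rho>)"
      using pure_hom_iff f by blast
    have "\<exists>\<rho>\<in>hom C I D. causal C \<rho> \<and> g' = (f \<cdot> h) \<otimes> \<rho>"
      if D: "D \<in> Ob C" and g': "g' \<in> hom C W (Y \<otimes>\<^sub>o D)"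
        and eq: "(idm Y \<otimes> Dc D) \<cdot> g' = f \<cdot> h" for D g'
    proof -
      note g'_arr = g'[unfolded hom_def]
      have g: "g' \<cdot> h' \<in> hom C X (Y \<otimes>\<^sub>o D)"
        using g'_arr arrs D ob by (simp add: hom_def)
      have "(idm Y \<otimes> Dc D) \<cdot> (g' \<cdot> h') = (f \<cdot> h) \<cdot> h'"
        using eq g'_arr arrs D ob by (simp flip: comp_assoc)
      also have "\<dots> = f"
        using h(4) arrs by simp
      finally obtain \<rho> where \<rho>: "\<rho> \<in> hom C I D" "causal C \<rho>" "g' \<cdot> h' = f \<otimes> \<rho>"
        using split D g by blast
      have "g' = (g' \<cdot> h') \<cdot> h"
        using h(3) g'_arr arrs by simp
      also have "\<dots> = (f \<otimes> \<rho>) \<cdot> (h \<otimes> idm I)"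
        using \<rho>(3) arrs by simp
      also have "\<dots> = (f \<cdot> h) \<otimes> \<rho>"
        using \<rho>(1) arrs by (simp add: hom_def del: tens_unit)
      finally show ?thesis
        using \<rho> by blast
    qed
    then show ?thesis
      using pure_hom_iff[OF fh] by blast
  qed
qed

lemma normalise_ex1:
  assumes "\<chi> \<in> hom C I X" "\<chi> \<noteq> Z I X"
  shows "\<exists>!\<sigma>. \<sigma> \<in> hom C I X \<and> causal C \<sigma> \<and> (\<exists>r\<in>hom C I I. \<chi> = \<sigma> \<otimes> r)"
  using normalisation assms hom_ob unfolding normalisation_def by blast

lemma normalise_eq:
  "\<chi> \<in> hom C I X \<Longrightarrow>
   normalise C \<chi> = (THE \<sigma>. \<sigma> \<in> hom C I X \<and> causal C \<sigma> \<and> (\<exists>r\<in>hom C I I. \<chi> = \<sigma> \<otimes> r))"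
  by (simp add: normalise_def hom_def)

lemma
  assumes \<chi>: "\<chi> \<in> hom C I X" and nz: "\<chi> \<noteq> Z I X"
  shows normalise_hom: "normalise C \<chi> \<in> hom C I X"
    and causal_normalise: "causal C (normalise C \<chi>)"
    and normalise_tens_disc: "\<chi> = normalise C \<chi> \<otimes> (Dc X \<cdot> \<chi>)"
proof -
  have X: "X \<in> Ob C"
    using hom_ob(2)[OF \<chi>] .
  define n where "n = normalise C \<chi>"
  have "n \<in> hom C I X \<and> causal C n \<and> (\<exists>r\<in>hom C I I. \<chi> = n \<otimes> r)"
    unfolding n_def normalise_eq[OF \<chi>] by (rule theI'[OF normalise_ex1[OF \<chi> nz]])
  then obtain r where n: "n \<in> hom C I X" "causal C n" and r: "r \<in> hom C I I" "\<chi> = n \<otimes> r"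
    by blast
  note arrs = n(1)[unfolded hom_def] r(1)[unfolded hom_def]
  have "Dc X \<cdot> \<chi> = (Dc X \<otimes> idm I) \<cdot> (n \<otimes> r)"
    using r(2) X by simp
  also have "\<dots> = (Dc X \<cdot> n) \<otimes> (idm I \<cdot> r)"
    by (rule interchange) (use arrs X in simp_all)
  also have "\<dots> = r"
    using causal_state_iff[OF n(1)] n(2) arrs by simp
  finally have "Dc X \<cdot> \<chi> = r" .
  with n r show "normalise C \<chi> \<in> hom C I X" "causal C (normalise C \<chi>)"
    "\<chi> = normalise C \<chi> \<otimes> (Dc X \<cdot> \<chi>)"
    unfolding n_def by simp_all
qed

lemma normalise_unique:
  assumes "\<chi> \<in> hom C I X" "\<chi> \<noteq> Z I X"
    and "\<sigma> \<in> hom C I X" "causal C \<sigma>" "r \<in> hom C I I" "\<chi> = \<sigma> \<otimes> r"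
  shows "normalise C \<chi> = \<sigma>"
proof -
  have "(THE \<sigma>. \<sigma> \<in> hom C I X \<and> causal C \<sigma> \<and> (\<exists>r\<in>hom C I I. \<chi> = \<sigma> \<otimes> r)) = \<sigma>"
    using assms(3-6) by (intro the1_equality[OF normalise_ex1[OF assms(1,2)]]) auto
  then show ?thesis
    using normalise_eq[OF assms(1)] by simp
qed

lemma normalise_nonzero:
  assumes \<chi>: "\<chi> \<in> hom C I X" and nz: "\<chi> \<noteq> Z I X"
  shows "normalise C \<chi> \<noteq> Z I X"
proof
  assume "normalise C \<chi> = Z I X"
  then have "\<chi> = Z I X \<otimes> (Dc X \<cdot> \<chi>)"
    using normalise_tens_disc[OF \<chi> nz] by simp
  also have "\<dots> = Z I X"
    using \<chi> hom_ob(2)[OF \<chi>] by (simp add: hom_def)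
  finally show False
    using nz by simp
qed

lemma normalise_causal:
  assumes "\<psi> \<in> hom C I X" "causal C \<psi>" "\<psi> \<noteq> Z I X"
  shows "normalise C \<psi> = \<psi>"
  using normalise_unique[OF assms(1,3,1,2), of "idm I"] assms(1) by (simp add: hom_def)

lemma causal_tens_states:
  assumes "\<sigma> \<in> hom C I X" "causal C \<sigma>" "\<rho> \<in> hom C I D" "causal C \<rho>"
  shows "causal C (\<sigma> \<otimes> \<rho>)"
proof -
  note arrs = assms(1,3)[unfolded hom_def]
  have "Dc (X \<otimes>\<^sub>o D) \<cdot> (\<sigma> \<otimes> \<rho>) = (Dc X \<cdot> \<sigma>) \<otimes> (Dc D \<cdot> \<rho>)"
    using arrs hom_ob(2)[OF assms(1)] hom_ob(2)[OF assms(3)] by simp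
  also have "\<dots> = idm I"
    using assms causal_state_iff by simp
  finally show ?thesis
    using causal_state_iff[of "\<sigma> \<otimes> \<rho>"] arrs by (simp add: hom_def)
qed

lemma causal_if_marginal_causal:
  assumes g: "g \<in> hom C I (X \<otimes>\<^sub>o D)" and X: "X \<in> Ob C" and D: "D \<in> Ob C"
    and marg: "causal C ((idm X \<otimes> Dc D) \<cdot> g)"
  shows "causal C g"
proof -
  note g_arr = g[unfolded hom_def]
  have "Dc (X \<otimes>\<^sub>o D) \<cdot> g = (Dc X \<otimes> idm I) \<cdot> ((idm X \<otimes> Dc D) \<cdot> g)"
    using g_arr X D by (simp del: tens_unit)
  also have "\<dots> = idm I"
    using marg g_arr X D by (simp add: causal_def)
  finally show ?thesis
    using causal_state_iff[OF g] by simp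
qed

lemma pure_normalise:
  assumes \<chi>: "\<chi> \<in> hom C I X" "pure C \<chi>" and nz: "\<chi> \<noteq> Z I X"
  shows "pure C (normalise C \<chi>)"
proof -
  have X: "X \<in> Ob C"
    using hom_ob(2)[OF \<chi>(1)] .
  define n where "n = normalise C \<chi>"
  define r where "r = Dc X \<cdot> \<chi>"
  have n: "n \<in> hom C I X" "causal C n" and \<chi>_eq: "\<chi> = n \<otimes> r"
    using normalise_hom[OF \<chi>(1) nz] causal_normalise[OF \<chi>(1) nz] normalise_tens_disc[OF \<chi>(1) nz]
    unfolding n_def r_def by auto
  have r: "r \<in> hom C I I"
    using \<chi>(1) X by (simp add: r_def hom_def)
  note arrs = n(1)[unfolded hom_def] r[unfolded hom_def]
  have split: "\<forall>D\<in>Ob C. \<forall>g\<in>hom C I (X \<otimes>\<^sub>o D). (idm X \<otimes> Dc D) \<cdot> g = \<chi> \<longrightarrow>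
      (\<exists>\<rho>\<in>hom C I D. causal C \<rho> \<and> g = \<chi> \<otimes> \<rho>)"
    using pure_hom_iff[OF \<chi>(1)] \<chi>(2) nz by simp
  (* A dilation g of n scales to the dilation g \<otimes> r of \<chi>; purity of \<chi> splits it, and
     uniqueness of normalisation cancels the scalar r. *)
  have "\<exists>\<rho>\<in>hom C I D. causal C \<rho> \<and> g = n \<otimes> \<rho>"
    if D: "D \<in> Ob C" and g: "g \<in> hom C I (X \<otimes>\<^sub>o D)" and marg: "(idm X \<otimes> Dc D) \<cdot> g = n" for D g
  proof -
    note g_arr = g[unfolded hom_def]
    have gr: "g \<otimes> r \<in> hom C I (X \<otimes>\<^sub>o D)"
      using g_arr arrs D X by (simp add: hom_def)
    have "(idm X \<otimes> Dc D) \<cdot> (g \<otimes> r) = ((idm X \<otimes> Dc D) \<otimes> idm I) \<cdot> (g \<otimes> r)"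
      using D X by simp
    also have "\<dots> = ((idm X \<otimes> Dc D) \<cdot> g) \<otimes> (idm I \<cdot> r)"
      by (rule interchange) (use g_arr arrs D X in simp_all)
    also have "\<dots> = \<chi>"
      using marg \<chi>_eq arrs by simp
    finally have marg_r: "(idm X \<otimes> Dc D) \<cdot> (g \<otimes> r) = \<chi>" .
    then obtain \<rho> where \<rho>: "\<rho> \<in> hom C I D" "causal C \<rho>" "g \<otimes> r = \<chi> \<otimes> \<rho>"
      using split D gr by blast
    note \<rho>_arr = \<rho>(1)[unfolded hom_def]
    have "g \<otimes> r = (n \<otimes> \<rho>) \<otimes> r"
      using \<rho>(3) \<chi>_eq scalar_commute[OF \<rho>(1) r] arrs \<rho>_arr by simp
    moreover have "g \<otimes> r \<noteq> Z I (X \<otimes>\<^sub>o D)"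
      using marg_r nz D X by auto
    moreover have "causal C g"
      using causal_if_marginal_causal[OF g X D] marg n(2) by simp
    moreover have "n \<otimes> \<rho> \<in> hom C I (X \<otimes>\<^sub>o D)" "causal C (n \<otimes> \<rho>)"
      using arrs \<rho>_arr causal_tens_states[OF n \<rho>(1,2)] by (simp_all add: hom_def)
    ultimately have "g = n \<otimes> \<rho>"
      using normalise_unique[OF gr _ g _ r] normalise_unique[OF gr _ _ _ r] by metis
    then show ?thesis
      using \<rho> by blast
  qed
  then show ?thesis
    using pure_hom_iff[OF n(1)] unfolding n_def by blast
qed

lemma dagger_causal_ex1:
  assumes "\<psi> \<in> hom C I X" "causal C \<psi>" "pure C \<psi>"
  shows "\<exists>!e. e \<in> hom C X I \<and> pure C e \<and> cocausal C e \<and> e \<cdot> \<psi> = idm I"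
  using sharpness assms hom_ob unfolding sharpness_def by blast

lemma dagger_causal_eq:
  "\<psi> \<in> hom C I X \<Longrightarrow>
   dagger_causal C \<psi> = (THE e. e \<in> hom C X I \<and> pure C e \<and> cocausal C e \<and> e \<cdot> \<psi> = idm I)"
  by (simp add: dagger_causal_def hom_def)

lemma
  assumes "\<psi> \<in> hom C I X" "causal C \<psi>" "pure C \<psi>"
  shows dagger_causal_hom: "dagger_causal C \<psi> \<in> hom C X I"
    and pure_dagger_causal: "pure C (dagger_causal C \<psi>)"
    and cocausal_dagger_causal: "cocausal C (dagger_causal C \<psi>)"
    and dagger_causal_comp: "dagger_causal C \<psi> \<cdot> \<psi> = idm I"
  using theI'[OF dagger_causal_ex1[OF assms]] dagger_causal_eq[OF assms(1)] by auto

lemma dagger_causal_unique: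
  assumes "\<psi> \<in> hom C I X" "causal C \<psi>" "pure C \<psi>"
    and "e \<in> hom C X I" "pure C e" "cocausal C e" "e \<cdot> \<psi> = idm I"
  shows "dagger_causal C \<psi> = e"
  using dagger_causal_eq[OF assms(1)] the1_equality[OF dagger_causal_ex1[OF assms(1-3)]] assms(4-7)
  by simp

lemma bar_zero [simp]: "X \<in> Ob C \<Longrightarrow> bar C (Z I X) = Z X I"
  by (simp add: bar_def)

lemma bar_nonzero:
  "\<chi> \<in> hom C I X \<Longrightarrow> \<chi> \<noteq> Z I X \<Longrightarrow> bar C \<chi> = dagger_causal C (normalise C \<chi>) \<otimes> (Dc X \<cdot> \<chi>)"
  by (simp add: bar_def hom_def)

lemma
  assumes \<chi>: "\<chi> \<in> hom C I X" "pure C \<chi>" and nz: "\<chi> \<noteq> Z I X"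
  shows dagger_normalise_hom: "dagger_causal C (normalise C \<chi>) \<in> hom C X I"
    and cocausal_dagger_normalise: "cocausal C (dagger_causal C (normalise C \<chi>))"
  using dagger_causal_hom cocausal_dagger_causal normalise_hom[OF \<chi>(1) nz]
    causal_normalise[OF \<chi>(1) nz] pure_normalise[OF \<chi> nz] by blast+

lemma bar_hom:
  assumes \<chi>: "\<chi> \<in> hom C I X" "pure C \<chi>"
  shows "bar C \<chi> \<in> hom C X I"
proof (cases "\<chi> = Z I X")
  case True
  then show ?thesis
    using hom_ob(2)[OF \<chi>(1)] by (simp add: hom_def)
next
  case False
  then show ?thesis
    using bar_nonzero[OF \<chi>(1) False] dagger_normalise_hom[OF \<chi> False] \<chi>(1) hom_ob(2)[OF \<chi>(1)]
    by (simp add: hom_def)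
qed

lemma bar_causal:
  assumes \<psi>: "\<psi> \<in> hom C I X" "causal C \<psi>" "pure C \<psi>" and nz: "\<psi> \<noteq> Z I X"
  shows "bar C \<psi> = dagger_causal C \<psi>"
  using bar_nonzero[OF \<psi>(1) nz] normalise_causal[OF \<psi>(1,2) nz] causal_state_iff[OF \<psi>(1)] \<psi>(2)
    dagger_causal_hom[OF \<psi>] by (simp add: hom_def)

lemma bar_comp_mix:
  assumes \<chi>: "\<chi> \<in> hom C I X" "pure C \<chi>"
  shows "bar C \<chi> \<cdot> Mx X = Dc X \<cdot> \<chi>"
proof (cases "\<chi> = Z I X")
  case True
  then show ?thesis
    using hom_ob(2)[OF \<chi>(1)] by simp
next
  case False
  have X: "X \<in> Ob C"
    using hom_ob(2)[OF \<chi>(1)] .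
  define d where "d = dagger_causal C (normalise C \<chi>)"
  define r where "r = Dc X \<cdot> \<chi>"
  have d: "d \<in> hom C X I" "d \<cdot> Mx X = idm I"
    using dagger_normalise_hom[OF \<chi> False] cocausal_dagger_normalise[OF \<chi> False]
      cocausal_effect_iff d_def by auto
  have r: "r \<in> Ar C" "Dom C r = I" "Cod C r = I"
    using \<chi>(1) X by (simp_all add: r_def hom_def)
  have "bar C \<chi> \<cdot> Mx X = (d \<otimes> r) \<cdot> (Mx X \<otimes> idm I)"
    using bar_nonzero[OF \<chi>(1) False] X d_def r_def by simp
  also have "\<dots> = (d \<cdot> Mx X) \<otimes> (r \<cdot> idm I)"
    by (rule interchange) (use d(1) r X in \<open>simp_all add: hom_def\<close>)
  also have "\<dots> = r"
    using d(2) r by simp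
  finally show ?thesis
    unfolding r_def .
qed

lemma bar_eq_bar_normalise:
  assumes \<chi>: "\<chi> \<in> hom C I X" "pure C \<chi>" and nz: "\<chi> \<noteq> Z I X"
  shows "bar C \<chi> = bar C (normalise C \<chi>) \<otimes> (Dc X \<cdot> \<chi>)"
  using bar_nonzero[OF \<chi>(1) nz] bar_causal[OF normalise_hom[OF \<chi>(1) nz] causal_normalise[OF \<chi>(1) nz]
      pure_normalise[OF \<chi> nz] normalise_nonzero[OF \<chi>(1) nz]]
  by simp

lemma bar_comp_tens_mix_causal:
  assumes A: "A \<in> Ob C" and B: "B \<in> Ob C"
    and \<psi>: "\<psi> \<in> hom C I (A \<otimes>\<^sub>o B)" "causal C \<psi>" "pure C \<psi>"
    and \<phi>: "\<phi> \<in> hom C I A" "causal C \<phi>" "pure C \<phi>"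
  shows "bar C \<psi> \<cdot> (\<phi> \<otimes> Mx B) = bar C \<phi> \<cdot> ((idm A \<otimes> Dc B) \<cdot> \<psi>)"
proof -
  define \<chi> where "\<chi> = (bar C \<phi> \<otimes> idm B) \<cdot> \<psi>"
  have \<chi>: "pure C \<chi>" "bar C \<chi> = bar C \<psi> \<cdot> (\<phi> \<otimes> idm B)"
    using pure_composition A B \<psi> \<phi> unfolding pure_composition_def \<chi>_def by blast+
  note arrs = \<psi>(1)[unfolded hom_def] \<phi>(1)[unfolded hom_def] bar_hom[OF \<psi>(1,3), unfolded hom_def]
    bar_hom[OF \<phi>(1,3), unfolded hom_def]
  have \<chi>_hom: "\<chi> \<in> hom C I B"
    using arrs A B by (simp add: \<chi>_def hom_def)
  have "(\<phi> \<otimes> idm B) \<cdot> (idm I \<otimes> Mx B) = \<phi> \<otimes> Mx B"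
    using arrs B by (simp del: tens_unit)
  then have "bar C \<psi> \<cdot> (\<phi> \<otimes> Mx B) = bar C \<chi> \<cdot> Mx B"
    using \<chi>(2) arrs A B by simp
  also have "\<dots> = Dc B \<cdot> \<chi>"
    using bar_comp_mix[OF \<chi>_hom \<chi>(1)] .
  also have "\<dots> = (idm I \<otimes> Dc B) \<cdot> ((bar C \<phi> \<otimes> idm B) \<cdot> \<psi>)"
    using B by (simp add: \<chi>_def)
  also have "\<dots> = (bar C \<phi> \<otimes> idm I) \<cdot> ((idm A \<otimes> Dc B) \<cdot> \<psi>)"
    using arrs A B by (simp del: tens_unit tens_assoc)
  also have "\<dots> = bar C \<phi> \<cdot> ((idm A \<otimes> Dc B) \<cdot> \<psi>)"
    using arrs by simp
  finally show ?thesis .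
qed

lemma bar_comp_tens_mix:
  assumes A: "A \<in> Ob C" and B: "B \<in> Ob C"
    and \<omega>: "\<omega> \<in> hom C I (A \<otimes>\<^sub>o B)" "pure C \<omega>"
    and \<phi>: "\<phi> \<in> hom C I A" "causal C \<phi>" "pure C \<phi>"
  shows "bar C \<omega> \<cdot> (\<phi> \<otimes> Mx B) = bar C \<phi> \<cdot> ((idm A \<otimes> Dc B) \<cdot> \<omega>)"
proof (cases "\<omega> = Z I (A \<otimes>\<^sub>o B)")
  case True
  then show ?thesis
    using bar_hom[OF \<phi>(1,3)] \<phi>(1) A B by (simp add: hom_def)
next
  case False
  define n where "n = normalise C \<omega>"
  define r where "r = Dc (A \<otimes>\<^sub>o B) \<cdot> \<omega>"
  have n: "n \<in> hom C I (A \<otimes>\<^sub>o B)" "causal C n" "pure C n" and \<omega>_eq: "\<omega> = n \<otimes> r"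
    using normalise_hom[OF \<omega>(1) False] causal_normalise[OF \<omega>(1) False]
      pure_normalise[OF \<omega> False] normalise_tens_disc[OF \<omega>(1) False]
    unfolding n_def r_def by auto
  note arrs = n(1)[unfolded hom_def] \<phi>(1)[unfolded hom_def] bar_hom[OF n(1,3), unfolded hom_def]
    bar_hom[OF \<phi>(1,3), unfolded hom_def]
  have r: "r \<in> Ar C" "Dom C r = I" "Cod C r = I"
    using \<omega>(1) A B by (simp_all add: r_def hom_def)
  have "bar C \<omega> \<cdot> (\<phi> \<otimes> Mx B) = (bar C n \<otimes> r) \<cdot> ((\<phi> \<otimes> Mx B) \<otimes> idm I)"
    using bar_eq_bar_normalise[OF \<omega> False] arrs B unfolding n_def r_def by simp
  also have "\<dots> = (bar C n \<cdot> (\<phi> \<otimes> Mx B)) \<otimes> r"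
    using arrs r A B by (simp del: tens_unit tens_assoc)
  also have "\<dots> = (bar C \<phi> \<cdot> ((idm A \<otimes> Dc B) \<cdot> n)) \<otimes> r"
    using bar_comp_tens_mix_causal[OF A B n \<phi>] by simp
  also have "\<dots> = (bar C \<phi> \<otimes> idm I) \<cdot> (((idm A \<otimes> Dc B) \<otimes> idm I) \<cdot> (n \<otimes> r))"
    using arrs r A B by (simp del: tens_unit tens_assoc)
  also have "\<dots> = bar C \<phi> \<cdot> ((idm A \<otimes> Dc B) \<cdot> \<omega>)"
    using arrs A B \<omega>_eq by simp
  finally show ?thesis .
qed

lemma causal_comp:
  assumes "f \<in> Ar C" "g \<in> Ar C" "Dom C g = Cod C f" "causal C f" "causal C g"
  shows "causal C (g \<cdot> f)"
proof -
  have "Disc C (Cod C g) \<cdot> (g \<cdot> f) = (Disc C (Cod C g) \<cdot> g) \<cdot> f"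
    using assms(1-3) by simp
  then show ?thesis
    using assms unfolding causal_def by simp
qed

lemma cocausal_comp:
  assumes "f \<in> Ar C" "g \<in> Ar C" "Dom C g = Cod C f" "cocausal C f" "cocausal C g"
  shows "cocausal C (g \<cdot> f)"
  using assms unfolding cocausal_def by simp

lemma dagger_causal_iso_comp:
  assumes \<psi>: "\<psi> \<in> hom C I X" "causal C \<psi>" "pure C \<psi>"
    and k: "k \<in> hom C X Y" "k' \<in> hom C Y X" "k' \<cdot> k = idm X" "k \<cdot> k' = idm Y"
    and causal_k: "causal C k" and cocausal_k': "cocausal C k'"
  shows "dagger_causal C (k \<cdot> \<psi>) = dagger_causal C \<psi> \<cdot> k'"
proof -
  note arrs = \<psi>(1)[unfolded hom_def] k(1,2)[unfolded hom_def]
  define d where "d = dagger_causal C \<psi>"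
  have d: "d \<in> hom C X I" "pure C d" "cocausal C d" "d \<cdot> \<psi> = idm I"
    using dagger_causal_hom[OF \<psi>] pure_dagger_causal[OF \<psi>] cocausal_dagger_causal[OF \<psi>]
      dagger_causal_comp[OF \<psi>] unfolding d_def by auto
  note d_arr = d(1)[unfolded hom_def]
  have k\<psi>: "k \<cdot> \<psi> \<in> hom C I Y" "causal C (k \<cdot> \<psi>)" "pure C (k \<cdot> \<psi>)"
    using arrs causal_comp[of \<psi> k] \<psi>(2) causal_k pure_iso_comp[OF \<psi>(1,3) k]
    by (simp_all add: hom_def)
  have "(d \<cdot> k') \<cdot> (k \<cdot> \<psi>) = d \<cdot> ((k' \<cdot> k) \<cdot> \<psi>)"
    using d_arr arrs by simp
  then have "(d \<cdot> k') \<cdot> (k \<cdot> \<psi>) = idm I"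
    using d(4) k(3) arrs by simp
  moreover have "d \<cdot> k' \<in> hom C Y I"
    using d_arr arrs by (simp add: hom_def)
  moreover have "pure C (d \<cdot> k')"
    using pure_comp_iso[OF d(1,2) k(2,1,4,3)] .
  moreover have "cocausal C (d \<cdot> k')"
    using cocausal_comp[of k' d] d(3) cocausal_k' d_arr arrs by simp
  ultimately show ?thesis
    using dagger_causal_unique[OF k\<psi>] unfolding d_def by blast
qed

lemma iso_comp_nonzero:
  assumes "\<omega> \<in> hom C I X" "\<omega> \<noteq> Z I X" "k \<in> hom C X Y" "k' \<in> hom C Y X" "k' \<cdot> k = idm X"
  shows "k \<cdot> \<omega> \<noteq> Z I Y"
proof
  assume "k \<cdot> \<omega> = Z I Y"
  then have "(k' \<cdot> k) \<cdot> \<omega> = Z I X"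
    using assms(1,3,4) hom_ob(1)[OF assms(3)] by (simp add: hom_def)
  then show False
    using assms(1,2,5) by (simp add: hom_def)
qed

lemma normalise_iso_comp:
  assumes \<omega>: "\<omega> \<in> hom C I X" "pure C \<omega>" and nz: "\<omega> \<noteq> Z I X"
    and k: "k \<in> hom C X Y" "k' \<in> hom C Y X" "k' \<cdot> k = idm X" "k \<cdot> k' = idm Y"
    and causal_k: "causal C k"
  shows "normalise C (k \<cdot> \<omega>) = k \<cdot> normalise C \<omega>"
proof -
  define n where "n = normalise C \<omega>"
  define r where "r = Dc X \<cdot> \<omega>"
  have n: "n \<in> hom C I X" "causal C n" and \<omega>_eq: "\<omega> = n \<otimes> r"
    using normalise_hom[OF \<omega>(1) nz] causal_normalise[OF \<omega>(1) nz] normalise_tens_disc[OF \<omega>(1) nz]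
    unfolding n_def r_def by auto
  have r: "r \<in> hom C I I"
    using \<omega>(1) hom_ob(1)[OF k(1)] by (simp add: r_def hom_def)
  note arrs = n(1)[unfolded hom_def] r[unfolded hom_def] k(1)[unfolded hom_def]
  have "k \<cdot> \<omega> = (k \<otimes> idm I) \<cdot> (n \<otimes> r)"
    using \<omega>_eq arrs by simp
  also have "\<dots> = (k \<cdot> n) \<otimes> r"
    using arrs by (simp del: tens_unit)
  finally show ?thesis
    using normalise_unique[OF _ iso_comp_nonzero[OF \<omega>(1) nz k(1-3)] _ causal_comp[of n k] r]
      n(2) causal_k arrs hom_ob[OF k(1)] unfolding n_def by (simp add: hom_def)
qed

lemma bar_iso_comp:
  assumes \<omega>: "\<omega> \<in> hom C I X" "pure C \<omega>"
    and k: "k \<in> hom C X Y" "k' \<in> hom C Y X" "k' \<cdot> k = idm X" "k \<cdot> k' = idm Y"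
    and causal_k: "causal C k" and cocausal_k': "cocausal C k'"
  shows "bar C (k \<cdot> \<omega>) = bar C \<omega> \<cdot> k'"
proof (cases "\<omega> = Z I X")
  case True
  then show ?thesis
    using hom_ob[OF k(1)] k(1,2) by (simp add: hom_def)
next
  case False
  have X: "X \<in> Ob C" and Y: "Y \<in> Ob C"
    using hom_ob k(1) by auto
  note arrs = \<omega>(1)[unfolded hom_def] k(1,2)[unfolded hom_def]
  have k\<omega>: "k \<cdot> \<omega> \<in> hom C I Y" "pure C (k \<cdot> \<omega>)" "k \<cdot> \<omega> \<noteq> Z I Y"
    using arrs pure_iso_comp[OF \<omega> k] iso_comp_nonzero[OF \<omega>(1) False k(1-3)]
    by (simp_all add: hom_def)
  define n where "n = normalise C \<omega>"
  define r where "r = Dc X \<cdot> \<omega>"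
  have n: "n \<in> hom C I X" "causal C n" "pure C n" "n \<noteq> Z I X"
    using normalise_hom[OF \<omega>(1) False] causal_normalise[OF \<omega>(1) False]
      pure_normalise[OF \<omega> False] normalise_nonzero[OF \<omega>(1) False]
    unfolding n_def by auto
  have kn: "k \<cdot> n \<in> hom C I Y" "causal C (k \<cdot> n)" "pure C (k \<cdot> n)" "k \<cdot> n \<noteq> Z I Y"
    using n(1)[unfolded hom_def] arrs causal_comp[of n k] n(2) causal_k pure_iso_comp[OF n(1,3) k]
      iso_comp_nonzero[OF n(1,4) k(1-3)] by (simp_all add: hom_def)
  have "Dc Y \<cdot> (k \<cdot> \<omega>) = (Dc Y \<cdot> k) \<cdot> \<omega>"
    by (rule comp_assoc[symmetric]) (use arrs Y in simp_all)
  also have "\<dots> = r"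
    using causal_k arrs unfolding r_def causal_def by simp
  finally have disc_k\<omega>: "Dc Y \<cdot> (k \<cdot> \<omega>) = r" .
  have "bar C (k \<cdot> n) = bar C n \<cdot> k'"
    using bar_causal[OF kn] bar_causal[OF n] dagger_causal_iso_comp[OF n(1-3) k causal_k cocausal_k']
    by simp
  then have "bar C (k \<cdot> \<omega>) = (bar C n \<cdot> k') \<otimes> r"
    using bar_eq_bar_normalise[OF k\<omega>] normalise_iso_comp[OF \<omega> False k causal_k] disc_k\<omega>
    unfolding n_def by simp
  also have "\<dots> = (bar C n \<otimes> r) \<cdot> (k' \<otimes> idm I)"
    using bar_hom[OF n(1,3)] \<omega>(1) arrs X by (simp add: r_def hom_def del: tens_unit)
  also have "\<dots> = bar C \<omega> \<cdot> k'"
    using bar_eq_bar_normalise[OF \<omega> False] arrs unfolding n_def r_def by simp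
  finally show ?thesis .
qed

lemma
  assumes A: "A \<in> Ob C" and B: "B \<in> Ob C" and \<omega>: "\<omega> \<in> hom C I (A \<otimes>\<^sub>o B)" "pure C \<omega>"
  shows pure_swap_comp: "pure C (Sw A B \<cdot> \<omega>)"
    and bar_swap_comp: "bar C (Sw A B \<cdot> \<omega>) = bar C \<omega> \<cdot> Sw B A"
proof -
  have swap: "Sw A B \<in> hom C (A \<otimes>\<^sub>o B) (B \<otimes>\<^sub>o A)" "Sw B A \<in> hom C (B \<otimes>\<^sub>o A) (A \<otimes>\<^sub>o B)"
    "Sw B A \<cdot> Sw A B = idm (A \<otimes>\<^sub>o B)" "Sw A B \<cdot> Sw B A = idm (B \<otimes>\<^sub>o A)"
    using A B swap_inverse by (simp_all add: hom_def)
  moreover have "causal C (Sw A B)" "cocausal C (Sw B A)"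
    using A B disc_comp_swap swap_comp_mix by (simp_all add: causal_def cocausal_def)
  ultimately show "pure C (Sw A B \<cdot> \<omega>)" "bar C (Sw A B \<cdot> \<omega>) = bar C \<omega> \<cdot> Sw B A"
    using pure_iso_comp[OF \<omega>] bar_iso_comp[OF \<omega>] by blast+
qed

lemma bar_comp_id_tens_mix:
  assumes det: "pure_states_determine_discard C A" and A: "A \<in> Ob C" and B: "B \<in> Ob C"
    and \<omega>: "\<omega> \<in> hom C I (A \<otimes>\<^sub>o B)" "pure C \<omega>" and marg: "(idm A \<otimes> Dc B) \<cdot> \<omega> = Mx A"
  shows "bar C \<omega> \<cdot> (idm A \<otimes> Mx B) = Dc A"
proof -
  note bar_arr = bar_hom[OF \<omega>, unfolded hom_def]
  have "(bar C \<omega> \<cdot> (idm A \<otimes> Mx B)) \<cdot> \<phi> = idm I"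
    if \<phi>: "\<phi> \<in> hom C I A" "causal C \<phi>" "pure C \<phi>" for \<phi>
  proof -
    note \<phi>_arr = \<phi>(1)[unfolded hom_def]
    have "(idm A \<otimes> Mx B) \<cdot> (\<phi> \<otimes> idm I) = \<phi> \<otimes> Mx B"
      using \<phi>_arr A B by (simp del: tens_unit)
    then have "(bar C \<omega> \<cdot> (idm A \<otimes> Mx B)) \<cdot> \<phi> = bar C \<omega> \<cdot> (\<phi> \<otimes> Mx B)"
      using bar_arr \<phi>_arr A B by simp
    also have "\<dots> = bar C \<phi> \<cdot> Mx A"
      using bar_comp_tens_mix[OF A B \<omega> \<phi>] marg by simp
    also have "\<dots> = Dc A \<cdot> \<phi>"
      using bar_comp_mix[OF \<phi>(1,3)] .
    also have "\<dots> = idm I"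
      using causal_state_iff[OF \<phi>(1)] \<phi>(2) by simp
    finally show ?thesis .
  qed
  moreover have "bar C \<omega> \<cdot> (idm A \<otimes> Mx B) \<in> hom C A I"
    using bar_arr A B by (simp add: hom_def)
  ultimately show ?thesis
    using det unfolding pure_states_determine_discard_def by blast
qed

lemma bar_comp_mix_tens_id:
  assumes det: "pure_states_determine_discard C B" and A: "A \<in> Ob C" and B: "B \<in> Ob C"
    and \<omega>: "\<omega> \<in> hom C I (A \<otimes>\<^sub>o B)" "pure C \<omega>" and marg: "(Dc A \<otimes> idm B) \<cdot> \<omega> = Mx B"
  shows "bar C \<omega> \<cdot> (Mx A \<otimes> idm B) = Dc B"
proof -
  note \<omega>_arr = \<omega>(1)[unfolded hom_def]
  have swapped: "Sw A B \<cdot> \<omega> \<in> hom C I (B \<otimes>\<^sub>o A)" "pure C (Sw A B \<cdot> \<omega>)"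
    using \<omega>_arr A B pure_swap_comp[OF A B \<omega>] by (simp_all add: hom_def)
  have "(idm B \<otimes> Dc A) \<cdot> (Sw A B \<cdot> \<omega>) = (Dc A \<otimes> idm B) \<cdot> \<omega>"
    using swap_natural[of "Dc A" "idm B"] \<omega>_arr A B by (simp flip: comp_assoc)
  then have "bar C (Sw A B \<cdot> \<omega>) \<cdot> (idm B \<otimes> Mx A) = Dc B"
    using bar_comp_id_tens_mix[OF det B A swapped] marg by simp
  moreover have "Sw B A \<cdot> (idm B \<otimes> Mx A) = Mx A \<otimes> idm B"
    using swap_natural[of "idm B" "Mx A"] A B by simp
  ultimately show ?thesis
    using bar_swap_comp[OF A B \<omega>] bar_hom[OF \<omega>] A B by (simp add: hom_def)
qed

end

theorem mainTheorem7:
  fixes C :: "('o, 'm) opt_cat"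
  assumes "strict_smc C"
    and "has_discarding C"
    and "has_mixed C"
    and "has_zeros C"
    and "normalisation C"
    and "sharpness C"
    and "pure_composition C"
    and "\<forall>A \<in> Ob C. \<forall>e \<in> hom C A (UnitO C).
           (\<forall>\<psi> \<in> hom C (UnitO C) A. causal C \<psi> \<longrightarrow> pure C \<psi> \<longrightarrow> Cmp C e \<psi> = Idm C (UnitO C))
           \<longleftrightarrow> e = Disc C A"
  shows "pre_duals C \<longleftrightarrow> (\<forall>A \<in> Ob C. \<exists>B \<in> Ob C. \<exists>\<omega>. double_purification C A B \<omega>)"
proof -
  interpret sharp_theory C
    by (rule sharp_theory.intro) (fact assms)+
  have det: "pure_states_determine_discard C A" if "A \<in> Ob C" for A
    using assms(8) that unfolding pure_states_determine_discard_def by blast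
  show ?thesis
  proof
    assume "pre_duals C"
    then show "\<forall>A \<in> Ob C. \<exists>B \<in> Ob C. \<exists>\<omega>. double_purification C A B \<omega>"
      unfolding pre_duals_def by blast
  next
    assume purifications: "\<forall>A \<in> Ob C. \<exists>B \<in> Ob C. \<exists>\<omega>. double_purification C A B \<omega>"
    show "pre_duals C"
      unfolding pre_duals_def
    proof
      fix A
      assume A: "A \<in> Ob C"
      then obtain B \<omega> where B: "B \<in> Ob C" and dp: "double_purification C A B \<omega>"
        using purifications by blast
      then have "bar C \<omega> \<cdot> (Mx A \<otimes> idm B) = Dc B" "bar C \<omega> \<cdot> (idm A \<otimes> Mx B) = Dc A"
        using bar_comp_mix_tens_id[OF det[OF B] A B] bar_comp_id_tens_mix[OF det[OF A] A B]
        unfolding double_purification_def by blast+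
      with B dp show "\<exists>B \<in> Ob C. \<exists>\<omega>. double_purification C A B \<omega> \<and>
          bar C \<omega> \<cdot> (Mx A \<otimes> idm B) = Dc B \<and> bar C \<omega> \<cdot> (idm A \<otimes> Mx B) = Dc A"
        by blast
    qed
  qed
qed

end
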